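(* Let $X$ and $Y$ be Hausdorff spaces with $X$ locally compact, and let $f:\mathrm{Closed}(X)\to\mathrm{Closed}(Y)$ be admissible. Then $X+_fY$ is Hausdorff if and only if $f(K)=\emptyset$ for every compact $K\subseteq X$ and, for all distinct $a,b\in Y$, there exist $A,B\in\mathrm{Closed}(X)$ with $A\cup B=X$, $b\notin f(A)$ and $a\notin f(B)$.
   Context: $\mathrm{Closed}(X)$ is the set of closed subsets of $X$. $f:\mathrm{Closed}(X)\to\mathrm{Closed}(Y)$ is admissible if $f(\emptyset)=\emptyset$ and $f(A_1\cup A_2)=f(A_1)\cup f(A_2)$. $X+_fY$ is the set $X\sqcup Y$ with the topology whose closed sets are the $D$ with $D\cap X$ closed in $X$, $D\cap Y$ closed in $Y$ and $f(D\cap X)\subseteq D$. *)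

theory Defs
  imports "HOL-Analysis.Analysis"
begin

text \<open>Admissible maps Closed(X) \<rightarrow> Closed(Y), represented as set functions whose
  behaviour is only constrained on closed subsets of X.\<close>
definition admissible :: "'a topology \<Rightarrow> 'b topology \<Rightarrow> ('a set \<Rightarrow> 'b set) \<Rightarrow> bool" where
  "admissible X Y f \<longleftrightarrow>
     (\<forall>C. closedin X C \<longrightarrow> closedin Y (f C)) \<and>
     f {} = {} \<and>
     (\<forall>A1 A2. closedin X A1 \<and> closedin X A2 \<longrightarrow> f (A1 \<union> A2) = f A1 \<union> f A2)"

definition glue_carrier :: "'a topology \<Rightarrow> 'b topology \<Rightarrow> ('a + 'b) set" where
  "glue_carrier X Y = Inl ` topspace X \<union> Inr ` topspace Y"

definition glue_closed :: "'a topology \<Rightarrow> 'b topology \<Rightarrow> ('a set \<Rightarrow> 'b set) \<Rightarrow> ('a + 'b) set \<Rightarrow> bool" where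
  "glue_closed X Y f D \<longleftrightarrow>
     D \<subseteq> glue_carrier X Y \<and>
     closedin X {x. Inl x \<in> D} \<and>
     closedin Y {y. Inr y \<in> D} \<and>
     Inr ` f {x. Inl x \<in> D} \<subseteq> D"

definition glue_top :: "'a topology \<Rightarrow> 'b topology \<Rightarrow> ('a set \<Rightarrow> 'b set) \<Rightarrow> ('a + 'b) topology" where
  "glue_top X Y f = topology (\<lambda>U. U \<subseteq> glue_carrier X Y \<and> glue_closed X Y f (glue_carrier X Y - U))"

end

theory Submission
  imports Defs
begin

text \<open>A set \<open>Inl A \<union> Inr C\<close> is closed in \<open>X +\<^sub>f Y\<close> iff \<open>A\<close> and \<open>C\<close> are closed and
  \<open>f A \<subseteq> C\<close>. If \<open>X +\<^sub>f Y\<close> is Hausdorff, the image \<open>Inl K\<close> of a compact \<open>K \<subseteq> X\<close> is compact,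
  hence closed, which forces \<open>f K = {}\<close>; and the closed complements of disjoint
  neighbourhoods of \<open>Inr a\<close> and \<open>Inr b\<close> restrict to a closed cover \<open>A \<union> B\<close> of \<open>X\<close> with
  \<open>b \<notin> f A\<close> and \<open>a \<notin> f B\<close>. Conversely, such a cover separates \<open>Inr a\<close> from \<open>Inr b\<close> after
  removing \<open>Inl B \<union> Inr (f B)\<close> and \<open>Inl A \<union> Inr (f A)\<close> from disjoint neighbourhoods
  in \<open>Y\<close>; a point of \<open>X\<close> is separated from \<open>Y\<close> by a compact neighbourhood \<open>K\<close>, for
  which \<open>Inl K\<close> is closed because \<open>f K = {}\<close>; and open sets of \<open>X\<close> remain open.\<close>

lemma admissible_closedin: "admissible X Y f \<Longrightarrow> closedin X A \<Longrightarrow> closedin Y (f A)"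
  by (simp add: admissible_def)

lemma admissible_Un:
  "admissible X Y f \<Longrightarrow> closedin X A \<Longrightarrow> closedin X B \<Longrightarrow> f (A \<union> B) = f A \<union> f B"
  by (simp add: admissible_def)

lemma admissible_mono:
  assumes "admissible X Y f" "closedin X A" "closedin X B" "A \<subseteq> B"
  shows "f A \<subseteq> f B"
  using admissible_Un[OF assms(1-3)] assms(4) by (metis Un_absorb1 Un_upper1)

lemma glue_closed_Un:
  assumes "admissible X Y f" "glue_closed X Y f D" "glue_closed X Y f E"
  shows "glue_closed X Y f (D \<union> E)"
proof -
  have parts: "{x. Inl x \<in> D \<union> E} = {x. Inl x \<in> D} \<union> {x. Inl x \<in> E}"
              "{y. Inr y \<in> D \<union> E} = {y. Inr y \<in> D} \<union> {y. Inr y \<in> E}"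
    by auto
  have "f {x. Inl x \<in> D \<union> E} = f {x. Inl x \<in> D} \<union> f {x. Inl x \<in> E}"
    unfolding parts using assms by (simp add: admissible_Un glue_closed_def)
  with assms(2,3) show ?thesis
    unfolding glue_closed_def parts by auto
qed

lemma glue_closed_Inter:
  assumes "admissible X Y f" "\<D> \<noteq> {}" "\<And>D. D \<in> \<D> \<Longrightarrow> glue_closed X Y f D"
  shows "glue_closed X Y f (\<Inter>\<D>)"
proof -
  have parts: "{x. Inl x \<in> \<Inter>\<D>} = (\<Inter>D\<in>\<D>. {x. Inl x \<in> D})"
              "{y. Inr y \<in> \<Inter>\<D>} = (\<Inter>D\<in>\<D>. {y. Inr y \<in> D})"
    by auto
  have closed: "closedin X {x. Inl x \<in> \<Inter>\<D>}" "closedin Y {y. Inr y \<in> \<Inter>\<D>}"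
    unfolding parts using assms(2,3) by (auto intro!: closedin_INT simp: glue_closed_def)
  have "Inr ` f {x. Inl x \<in> \<Inter>\<D>} \<subseteq> D" if "D \<in> \<D>" for D
  proof -
    have "closedin X {x. Inl x \<in> D}" "Inr ` f {x. Inl x \<in> D} \<subseteq> D"
      using assms(3)[OF that] by (simp_all add: glue_closed_def)
    moreover have "{x. Inl x \<in> \<Inter>\<D>} \<subseteq> {x. Inl x \<in> D}"
      using that by blast
    ultimately show ?thesis
      using admissible_mono[OF assms(1) closed(1)] by blast
  qed
  moreover have "\<Inter>\<D> \<subseteq> glue_carrier X Y"
    using assms(2,3) unfolding glue_closed_def by blast
  ultimately show ?thesis
    using closed unfolding glue_closed_def by blast
qed

lemma glue_closed_carrier:
  assumes "admissible X Y f"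
  shows "glue_closed X Y f (glue_carrier X Y)"
proof -
  have parts: "{x. Inl x \<in> glue_carrier X Y} = topspace X" "{y. Inr y \<in> glue_carrier X Y} = topspace Y"
    by (auto simp: glue_carrier_def)
  have "f (topspace X) \<subseteq> topspace Y"
    using admissible_closedin[OF assms] closedin_subset by blast
  then show ?thesis
    unfolding glue_closed_def parts by (auto simp: glue_carrier_def)
qed

lemma istopology_glue:
  assumes "admissible X Y f"
  shows "istopology (\<lambda>U. U \<subseteq> glue_carrier X Y \<and> glue_closed X Y f (glue_carrier X Y - U))"
  unfolding istopology_def
proof (rule conjI; intro allI impI)
  fix S T
  assume "S \<subseteq> glue_carrier X Y \<and> glue_closed X Y f (glue_carrier X Y - S)"
     and "T \<subseteq> glue_carrier X Y \<and> glue_closed X Y f (glue_carrier X Y - T)"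
  then show "S \<inter> T \<subseteq> glue_carrier X Y \<and> glue_closed X Y f (glue_carrier X Y - S \<inter> T)"
    using glue_closed_Un[OF assms] by (simp add: Diff_Int le_infI1)
next
  fix \<K>
  assume \<K>: "\<forall>S\<in>\<K>. S \<subseteq> glue_carrier X Y \<and> glue_closed X Y f (glue_carrier X Y - S)"
  have "glue_closed X Y f (glue_carrier X Y - \<Union>\<K>)"
  proof (cases "\<K> = {}")
    case True
    then show ?thesis using glue_closed_carrier[OF assms] by simp
  next
    case False
    have "glue_carrier X Y - \<Union>\<K> = \<Inter>((-) (glue_carrier X Y) ` \<K>)"
      using False by blast
    also have "glue_closed X Y f \<dots>"
      using False \<K> by (intro glue_closed_Inter[OF assms]) auto
    finally show ?thesis .
  qed
  with \<K> show "\<Union>\<K> \<subseteq> glue_carrier X Y \<and> glue_closed X Y f (glue_carrier X Y - \<Union>\<K>)"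
    by blast
qed

lemma openin_glue_top:
  assumes "admissible X Y f"
  shows "openin (glue_top X Y f) U \<longleftrightarrow>
           U \<subseteq> glue_carrier X Y \<and> glue_closed X Y f (glue_carrier X Y - U)"
  unfolding glue_top_def using istopology_glue[OF assms] by simp

lemma topspace_glue_top:
  assumes "admissible X Y f"
  shows "topspace (glue_top X Y f) = glue_carrier X Y"
proof -
  have "glue_closed X Y f {}"
    using assms by (simp add: glue_closed_def admissible_def)
  then have "openin (glue_top X Y f) (glue_carrier X Y)"
    by (simp add: openin_glue_top[OF assms])
  moreover have "topspace (glue_top X Y f) \<subseteq> glue_carrier X Y"
    using openin_glue_top[OF assms, of "topspace (glue_top X Y f)"] by simp
  ultimately show ?thesis
    by (simp add: openin_subset subset_antisym)
qed

lemma closedin_glue_top: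
  assumes "admissible X Y f"
  shows "closedin (glue_top X Y f) D \<longleftrightarrow> glue_closed X Y f D"
proof -
  have "closedin (glue_top X Y f) D \<longleftrightarrow>
          D \<subseteq> glue_carrier X Y \<and> glue_closed X Y f (glue_carrier X Y - (glue_carrier X Y - D))"
    unfolding closedin_def topspace_glue_top[OF assms] openin_glue_top[OF assms] by blast
  also have "\<dots> \<longleftrightarrow> glue_closed X Y f D"
  proof (cases "D \<subseteq> glue_carrier X Y")
    case True
    then show ?thesis by (simp add: double_diff)
  next
    case False
    then show ?thesis by (simp add: glue_closed_def)
  qed
  finally show ?thesis .
qed

lemma closedin_glue_top_sum:
  assumes "admissible X Y f"
  shows "closedin (glue_top X Y f) (Inl ` A \<union> Inr ` C) \<longleftrightarrow>
           closedin X A \<and> closedin Y C \<and> f A \<subseteq> C"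
proof -
  have parts: "{x. Inl x \<in> Inl ` A \<union> Inr ` C} = A" "{y. Inr y \<in> Inl ` A \<union> Inr ` C} = C"
    by auto
  have "Inl ` A \<union> Inr ` C \<subseteq> glue_carrier X Y" if "closedin X A" "closedin Y C"
    using that unfolding glue_carrier_def by (auto dest!: closedin_subset)
  moreover have "Inr ` f A \<subseteq> Inl ` A \<union> Inr ` C \<longleftrightarrow> f A \<subseteq> C"
    by (auto simp: image_subset_iff)
  ultimately show ?thesis
    unfolding closedin_glue_top[OF assms] glue_closed_def parts by blast
qed

lemma openin_glue_top_Inl:
  assumes "admissible X Y f" "openin X U"
  shows "openin (glue_top X Y f) (Inl ` U)"
proof -
  have "f (topspace X - U) \<subseteq> topspace Y"
    using admissible_closedin[OF assms(1)] assms(2) closedin_subset by blast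
  then have "closedin (glue_top X Y f) (Inl ` (topspace X - U) \<union> Inr ` topspace Y)"
    using assms by (simp add: closedin_glue_top_sum closedin_diff)
  moreover have "Inl ` U = topspace (glue_top X Y f) - (Inl ` (topspace X - U) \<union> Inr ` topspace Y)"
    using openin_subset[OF assms(2)] by (auto simp: topspace_glue_top[OF assms(1)] glue_carrier_def)
  ultimately show ?thesis
    by (simp add: openin_diff)
qed

lemma continuous_map_glue_top_Inl:
  assumes "admissible X Y f"
  shows "continuous_map X (glue_top X Y f) Inl"
  unfolding continuous_map_closedin
proof (intro conjI allI impI)
  show "Inl \<in> topspace X \<rightarrow> topspace (glue_top X Y f)"
    by (auto simp: topspace_glue_top[OF assms] glue_carrier_def)
next
  fix D
  assume "closedin (glue_top X Y f) D"
  then have "closedin X {x. Inl x \<in> D}"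
    by (simp add: closedin_glue_top[OF assms] glue_closed_def)
  moreover have "{x \<in> topspace X. Inl x \<in> D} = {x. Inl x \<in> D}"
    using closedin_subset[OF calculation] by blast
  ultimately show "closedin X {x \<in> topspace X. Inl x \<in> D}"
    by simp
qed

lemma Hausdorff_glue_top_imp_compact_null:
  assumes "admissible X Y f" "Hausdorff_space (glue_top X Y f)" "compactin X K"
  shows "f K = {}"
proof -
  have "compactin (glue_top X Y f) (Inl ` K)"
    using image_compactin[OF assms(3) continuous_map_glue_top_Inl[OF assms(1)]] .
  then have "closedin (glue_top X Y f) (Inl ` K)"
    using compactin_imp_closedin[OF assms(2)] by blast
  then show ?thesis
    using closedin_glue_top_sum[OF assms(1), of K "{}"] by simp
qed

lemma Hausdorff_glue_top_imp_separating_cover: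
  assumes "admissible X Y f" "Hausdorff_space (glue_top X Y f)"
    and "a \<in> topspace Y" "b \<in> topspace Y" "a \<noteq> b"
  shows "\<exists>A B. closedin X A \<and> closedin X B \<and> A \<union> B = topspace X \<and> b \<notin> f A \<and> a \<notin> f B"
proof -
  let ?Z = "glue_top X Y f"
  have "Inr a \<in> topspace ?Z" "Inr b \<in> topspace ?Z"
    using assms by (auto simp: topspace_glue_top glue_carrier_def)
  then obtain U V where UV: "openin ?Z U" "openin ?Z V" "Inr a \<in> U" "Inr b \<in> V" "disjnt U V"
    using assms(2,5) unfolding Hausdorff_space_def by blast
  define A where "A = {x. Inl x \<in> topspace ?Z - V}"
  define B where "B = {x. Inl x \<in> topspace ?Z - U}"
  have "glue_closed X Y f (topspace ?Z - V)" "glue_closed X Y f (topspace ?Z - U)"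
    using UV(1,2) closedin_glue_top[OF assms(1)] by blast+
  then have "closedin X A" "closedin X B" "Inr ` f A \<subseteq> topspace ?Z - V" "Inr ` f B \<subseteq> topspace ?Z - U"
    unfolding A_def B_def glue_closed_def by blast+
  moreover have "A \<union> B = topspace X"
    using UV(5) by (auto simp: A_def B_def disjnt_def topspace_glue_top[OF assms(1)] glue_carrier_def)
  ultimately show ?thesis
    using UV(3,4) by blast
qed

lemma glue_top_separate_Inl_Inl:
  assumes "admissible X Y f" "Hausdorff_space X"
    and "x \<in> topspace X" "x' \<in> topspace X" "x \<noteq> x'"
  shows "\<exists>U V. openin (glue_top X Y f) U \<and> openin (glue_top X Y f) V \<and>
                Inl x \<in> U \<and> Inl x' \<in> V \<and> disjnt U V"
proof -
  obtain U V where UV: "openin X U" "openin X V" "x \<in> U" "x' \<in> V" "disjnt U V"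
    using assms(2-5) unfolding Hausdorff_space_def by blast
  then have "disjnt (Inl ` U) (Inl ` V)"
    by (auto simp: disjnt_def)
  with UV show ?thesis
    using openin_glue_top_Inl[OF assms(1)] by blast
qed

lemma glue_top_separate_Inl_Inr:
  assumes "admissible X Y f" "Hausdorff_space X" "locally_compact_space X"
    and "\<And>K. compactin X K \<Longrightarrow> f K = {}"
    and "x \<in> topspace X" "y \<in> topspace Y"
  shows "\<exists>U V. openin (glue_top X Y f) U \<and> openin (glue_top X Y f) V \<and>
                Inl x \<in> U \<and> Inr y \<in> V \<and> disjnt U V"
proof -
  obtain U K where UK: "openin X U" "compactin X K" "x \<in> U" "U \<subseteq> K"
    using assms(3,5) unfolding locally_compact_space_def by blast
  have "closedin X K"
    using UK(2) assms(2) by (simp add: compactin_imp_closedin)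
  then have "closedin (glue_top X Y f) (Inl ` K)"
    using closedin_glue_top_sum[OF assms(1), of K "{}"] assms(4)[OF UK(2)] by simp
  then have "openin (glue_top X Y f) (topspace (glue_top X Y f) - Inl ` K)"
    by (simp add: openin_diff)
  moreover have "Inr y \<in> topspace (glue_top X Y f) - Inl ` K"
    using assms(6) by (auto simp: topspace_glue_top[OF assms(1)] glue_carrier_def)
  moreover have "disjnt (Inl ` U) (topspace (glue_top X Y f) - Inl ` K)"
    using UK(4) by (auto simp: disjnt_def)
  ultimately show ?thesis
    using openin_glue_top_Inl[OF assms(1) UK(1)] UK(3) by blast
qed

lemma glue_top_separate_Inr_Inr:
  assumes "admissible X Y f" "Hausdorff_space Y"
    and "a \<in> topspace Y" "b \<in> topspace Y" "a \<noteq> b"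
    and "closedin X A" "closedin X B" "A \<union> B = topspace X" "b \<notin> f A" "a \<notin> f B"
  shows "\<exists>U V. openin (glue_top X Y f) U \<and> openin (glue_top X Y f) V \<and>
                Inr a \<in> U \<and> Inr b \<in> V \<and> disjnt U V"
proof -
  let ?Z = "glue_top X Y f"
  obtain Ua Ub where U: "openin Y Ua" "openin Y Ub" "a \<in> Ua" "b \<in> Ub" "disjnt Ua Ub"
    using assms(2-5) unfolding Hausdorff_space_def by blast
  define Ca where "Ca = Inl ` B \<union> Inr ` ((topspace Y - Ua) \<union> f B)"
  define Cb where "Cb = Inl ` A \<union> Inr ` ((topspace Y - Ub) \<union> f A)"
  have "closedin Y (f A)" "closedin Y (f B)"
    using admissible_closedin[OF assms(1)] assms(6,7) by blast+
  then have "closedin ?Z Ca" "closedin ?Z Cb"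
    using U assms(6,7) by (auto simp: Ca_def Cb_def closedin_glue_top_sum[OF assms(1)] closedin_diff)
  then have "openin ?Z (topspace ?Z - Ca)" "openin ?Z (topspace ?Z - Cb)"
    by (simp_all add: openin_diff)
  moreover have "Inr a \<in> topspace ?Z - Ca" "Inr b \<in> topspace ?Z - Cb"
    using assms(3,4,9,10) U(3,4)
    by (auto simp: Ca_def Cb_def topspace_glue_top[OF assms(1)] glue_carrier_def)
  moreover have "disjnt (topspace ?Z - Ca) (topspace ?Z - Cb)"
    using assms(8) U(5)
    by (auto simp: Ca_def Cb_def disjnt_def topspace_glue_top[OF assms(1)] glue_carrier_def)
  ultimately show ?thesis
    by blast
qed

lemma Hausdorff_space_glue_top:
  assumes "admissible X Y f" "Hausdorff_space X" "Hausdorff_space Y" "locally_compact_space X"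
    and compact_null: "\<And>K. compactin X K \<Longrightarrow> f K = {}"
    and separating_cover: "\<And>a b. \<lbrakk>a \<in> topspace Y; b \<in> topspace Y; a \<noteq> b\<rbrakk> \<Longrightarrow>
           \<exists>A B. closedin X A \<and> closedin X B \<and> A \<union> B = topspace X \<and> b \<notin> f A \<and> a \<notin> f B"
  shows "Hausdorff_space (glue_top X Y f)"
  unfolding Hausdorff_space_def topspace_glue_top[OF assms(1)]
proof (intro allI impI)
  fix p q
  assume pq: "p \<in> glue_carrier X Y \<and> q \<in> glue_carrier X Y \<and> p \<noteq> q"
  show "\<exists>U V. openin (glue_top X Y f) U \<and> openin (glue_top X Y f) V \<and> p \<in> U \<and> q \<in> V \<and> disjnt U V"
  proof (cases p; cases q)
    fix x x' assume "p = Inl x" "q = Inl x'"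
    then show ?thesis
      using pq glue_top_separate_Inl_Inl[OF assms(1,2)] by (auto simp: glue_carrier_def)
  next
    fix x y assume "p = Inl x" "q = Inr y"
    then show ?thesis
      using pq glue_top_separate_Inl_Inr[OF assms(1,2,4) compact_null] by (auto simp: glue_carrier_def)
  next
    fix y x assume pq': "p = Inr y" "q = Inl x"
    then have "x \<in> topspace X" "y \<in> topspace Y"
      using pq by (auto simp: glue_carrier_def)
    then obtain U V where "openin (glue_top X Y f) U" "openin (glue_top X Y f) V"
        "Inl x \<in> U" "Inr y \<in> V" "disjnt U V"
      using glue_top_separate_Inl_Inr[OF assms(1,2,4) compact_null] by blast
    with pq' show ?thesis
      by (metis disjnt_sym)
  next
    fix a b assume pq': "p = Inr a" "q = Inr b"
    then have ab: "a \<in> topspace Y" "b \<in> topspace Y" "a \<noteq> b"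
      using pq by (auto simp: glue_carrier_def)
    then obtain A B where "closedin X A" "closedin X B" "A \<union> B = topspace X" "b \<notin> f A" "a \<notin> f B"
      using separating_cover by blast
    from glue_top_separate_Inr_Inr[OF assms(1,3) ab this] pq' show ?thesis
      by simp
  qed
qed

theorem mainTheorem11:
  fixes X :: "'a topology" and Y :: "'b topology" and f :: "'a set \<Rightarrow> 'b set"
  assumes "Hausdorff_space X" and "Hausdorff_space Y"
    and "locally_compact_space X"
    and "admissible X Y f"
  shows "Hausdorff_space (glue_top X Y f) \<longleftrightarrow>
           ((\<forall>K. compactin X K \<longrightarrow> f K = {}) \<and>
            (\<forall>a\<in>topspace Y. \<forall>b\<in>topspace Y. a \<noteq> b \<longrightarrow>
               (\<exists>A B. closedin X A \<and> closedin X B \<and> A \<union> B = topspace X \<and>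
                      b \<notin> f A \<and> a \<notin> f B)))"
  using Hausdorff_glue_top_imp_compact_null[OF assms(4)]
    Hausdorff_glue_top_imp_separating_cover[OF assms(4)]
    Hausdorff_space_glue_top[OF assms(4,1,2,3)]
  by blast

end
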